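(* Let $p,q>0$ and $0<x,y<\tfrac12$. Then $$B_{p,q}(x,y)\le (2p)^{\frac{2x-1}{2}}(2q)^{\frac{2y-1}{2}}\sqrt{\Gamma(-2x+1,2p)\,\Gamma(-2y+1,2q)}.$$
   Context: $B_{p,q}(x,y)=\int_0^1 t^{x-1}(1-t)^{y-1}\exp\!\left(-\frac{p}{t}-\frac{q}{1-t}\right)dt$ is the extended Beta function, and $\Gamma(s,a)=\int_a^\infty u^{s-1}e^{-u}\,du$ denotes the upper incomplete Gamma function. *)

theory Defs
  imports "HOL-Analysis.Analysis"
begin

definition ext_beta :: "real \<Rightarrow> real \<Rightarrow> real \<Rightarrow> real \<Rightarrow> real" where
  "ext_beta p q x y =
     (LINT t:{0<..<1}|lborel. t powr (x - 1) * (1 - t) powr (y - 1) * exp (- p / t - q / (1 - t)))"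

definition upper_inc_Gamma :: "real \<Rightarrow> real \<Rightarrow> real" where
  "upper_inc_Gamma s a = (LINT u:{a<..}|lborel. u powr (s - 1) * exp (- u))"

end

theory Submission
  imports Defs
begin

text \<open>Write the integrand of the extended Beta function as \<open>\<phi>(t) \<psi>(1 - t)\<close> with
  \<open>\<phi>(t) = t^(x-1) e^(-p/t)\<close> and \<open>\<psi>(t) = t^(y-1) e^(-q/t)\<close>, and apply the Cauchy-Schwarz
  inequality on \<open>(0,1)\<close>. The substitution \<open>t = 2p/u\<close> turns \<open>\<integral>\<^sub>0\<^sup>1 \<phi>\<^sup>2\<close> into
  \<open>(2p)^(2x-1) \<Gamma>(1 - 2x, 2p)\<close>, and likewise for \<open>\<psi>\<close> after the reflection \<open>t \<mapsto> 1 - t\<close>.\<close>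

lemma le_sqrt_mult_of_AM_GM_bounds:
  fixes I A B :: real
  assumes "A \<ge> 0" and "B \<ge> 0" and AM_GM: "\<And>l. l > 0 \<Longrightarrow> I \<le> l/2 * A + B / (2*l)"
  shows "I \<le> sqrt (A*B)"
proof (rule ccontr)
  assume "\<not> I \<le> sqrt (A*B)"
  then have I: "I > sqrt (A*B)" "I > 0"
    using assms(1,2) by (meson le_less_trans not_le real_sqrt_ge_zero zero_le_mult_iff)+
  consider "A = 0" | "B = 0" | "A > 0" "B > 0"
    using assms(1,2) by linarith
  then show False
  proof cases
    case 1
    have "I \<le> B * I / (2*(B+1))"
      using AM_GM[of "(B+1)/I"] I 1 assms(2) by (simp add: field_simps)
    also have "\<dots> < I"
      using I assms(2) by (simp add: field_simps add_nonneg_pos)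
    finally show False by simp
  next
    case 2
    have "I \<le> A * I / (2*(A+1))"
      using AM_GM[of "I/(A+1)"] I 2 assms(1) by (simp add: field_simps)
    also have "\<dots> < I"
      using I assms(1) by (simp add: field_simps add_nonneg_pos)
    finally show False by simp
  next
    case 3
    define l where "l = sqrt B / sqrt A"
    have "l > 0" "l/2 * A = sqrt (A*B) / 2" "B/(2*l) = sqrt (A*B) / 2"
      using 3 by (simp_all add: l_def real_sqrt_mult field_simps)
    then have "I \<le> sqrt (A*B)"
      using AM_GM[of l] by linarith
    with I show False by simp
  qed
qed

lemma set_integral_mult_le_sqrt:
  fixes f g :: "'a \<Rightarrow> real"
  assumes f2: "set_integrable M S (\<lambda>x. f x ^ 2)" and g2: "set_integrable M S (\<lambda>x. g x ^ 2)"
  shows "(LINT x:S|M. f x * g x) \<le> sqrt ((LINT x:S|M. f x ^ 2) * (LINT x:S|M. g x ^ 2))"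
proof -
  have nonneg: "(LINT x:S|M. f x ^ 2) \<ge> 0" "(LINT x:S|M. g x ^ 2) \<ge> 0"
    unfolding set_lebesgue_integral_def by (simp_all add: indicator_def)
  show ?thesis
  proof (cases "set_integrable M S (\<lambda>x. f x * g x)")
    case False
    then have "(LINT x:S|M. f x * g x) = 0"
      by (simp add: set_integrable_def set_lebesgue_integral_def not_integrable_integral_eq)
    then show ?thesis using nonneg by simp
  next
    case fg: True
    show ?thesis
    proof (rule le_sqrt_mult_of_AM_GM_bounds[OF nonneg])
      fix l :: real assume l: "l > 0"
      have AM_GM: "f x * g x \<le> l/2 * f x ^ 2 + 1/(2*l) * g x ^ 2" for x
      proof -
        have "0 \<le> (l * f x - g x)^2 / l" using l by simp
        also have "\<dots> = l * f x ^ 2 + g x ^ 2 / l - 2 * (f x * g x)"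
          using l by (simp add: power2_eq_square field_simps)
        finally show ?thesis using l by (simp add: field_simps)
      qed
      have "(LINT x:S|M. f x * g x) \<le> (LINT x:S|M. l/2 * f x ^ 2 + 1/(2*l) * g x ^ 2)"
        using fg f2 g2 AM_GM by (intro set_integral_mono set_integral_add) auto
      also have "\<dots> = l/2 * (LINT x:S|M. f x ^ 2) + (LINT x:S|M. g x ^ 2) / (2*l)"
        using f2 g2 by simp
      finally show "(LINT x:S|M. f x * g x) \<le> \<dots>" .
    qed
  qed
qed

lemma set_integral_reflect_unit_interval:
  fixes f :: "real \<Rightarrow> real"
  shows "set_integrable lborel {0<..<1} (\<lambda>t. f (1 - t)) \<longleftrightarrow> set_integrable lborel {0<..<1} f"
    and "(LINT t:{0<..<1}|lborel. f (1 - t)) = (LINT t:{0<..<1}|lborel. f t)"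
proof -
  define F where "F = (\<lambda>s. indicator {0<..<1::real} s *\<^sub>R f s)"
  have reflect: "(\<lambda>t. indicator {0<..<1::real} t *\<^sub>R f (1 - t)) = (\<lambda>t. F (1 + (-1) * t))"
    by (auto simp: F_def indicator_def)
  show "set_integrable lborel {0<..<1} (\<lambda>t. f (1 - t)) \<longleftrightarrow> set_integrable lborel {0<..<1} f"
    unfolding set_integrable_def reflect by (subst lborel_integrable_real_affine_iff) (auto simp: F_def)
  show "(LINT t:{0<..<1}|lborel. f (1 - t)) = (LINT t:{0<..<1}|lborel. f t)"
    unfolding set_lebesgue_integral_def reflect
    using lborel_integral_real_affine[of "-1" F 1] by (simp add: F_def)
qed

lemma inverse_substitution_powr_exp:
  fixes c v s :: real
  assumes "c > 0" and "v < 0"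
  shows "(-c/v) powr (-s-1) * exp (-c/(-c/v)) * (c/v^2) = c powr (-s) * ((-v) powr (s-1) * exp v)"
proof -
  define w where "w = -v"
  have w: "w > 0" "v = -w" using assms by (auto simp: w_def)
  have "w powr (-s-1) = inverse (w powr (s+1))"
    using powr_minus[of w "s+1"] by simp
  then have "(c/w) powr (-s-1) * (c/w^2) = (c powr (-s-1) * c powr 1) * (w powr (s+1) / w powr 2)"
    using assms w by (simp add: powr_divide field_simps)
  also have "\<dots> = c powr (-s) * w powr (s-1)"
    by (simp only: powr_add[symmetric] powr_diff[symmetric]) simp
  finally show ?thesis
    using assms w by (simp add: mult_ac)
qed

lemma set_integrable_powr_exp_left_ray:
  fixes c s :: real
  assumes "c > 0" and "s \<le> 1"
  shows "set_integrable lborel (einterval (-\<infinity>) (ereal (-c))) (\<lambda>v. (-v) powr (s-1) * exp v)"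
proof (rule set_integrable_bound[where f="\<lambda>v. c powr (s-1) * exp v"])
  have "set_integrable lborel (einterval (-\<infinity>) (ereal (-c))) exp"
    by (rule interval_integral_FTC_nonneg(1)[where F=exp and A=0 and B="exp (-c)"])
       (auto intro!: tendsto_eq_intros simp: ereal_tendsto_simps exp_at_bot)
  then show "set_integrable lborel (einterval (-\<infinity>) (ereal (-c))) (\<lambda>v. c powr (s-1) * exp v)"
    by simp
  show "set_borel_measurable lborel (einterval (-\<infinity>) (ereal (-c))) (\<lambda>v. (-v) powr (s-1) * exp v)"
    unfolding set_borel_measurable_def by measurable
  have "(-v) powr (s-1) \<le> c powr (s-1)" if "v < -c" for v
    using that assms by (intro powr_mono2') auto
  then show "AE v in lborel. v \<in> einterval (-\<infinity>) (ereal (-c)) \<longrightarrow>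
      norm ((-v) powr (s-1) * exp v) \<le> norm (c powr (s-1) * exp v)"
    by (intro AE_I2) auto
qed

lemma set_integral_powr_exp_inverse:
  fixes c s :: real
  assumes c: "c > 0" and s: "s \<le> 1"
  shows "set_integrable lborel {0<..<1} (\<lambda>t. t powr (-s-1) * exp (-c/t))"
    and "(LINT t:{0<..<1}|lborel. t powr (-s-1) * exp (-c/t)) = c powr (-s) * upper_inc_Gamma s c"
proof -
  txt \<open>The library's substitution rule needs an increasing change of variables: use
    \<open>t = -c/v\<close> on \<open>(-\<infinity>, -c)\<close>, then reflect \<open>v = -u\<close>.\<close>
  define f where "f t = t powr (-s-1) * exp (-c/t)" for t :: real
  define g where "g v = -c/v" for v :: real
  define g' where "g' v = c/v^2" for v :: real
  have subst: "f (g v) * g' v = c powr (-s) * ((-v) powr (s-1) * exp v)" if "v < 0" for v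
    using inverse_substitution_powr_exp[OF c that] by (simp add: f_def g_def g'_def)
  have "set_integrable lborel (einterval (-\<infinity>) (ereal (-c))) (\<lambda>v. c powr (-s) * ((-v) powr (s-1) * exp v))"
    using set_integrable_powr_exp_left_ray[OF c s] by simp
  then have integrable: "set_integrable lborel (einterval (-\<infinity>) (ereal (-c))) (\<lambda>v. f (g v) * g' v)"
    by (rule set_integrable_cong[THEN iffD1, rotated -1]) (use c subst in auto)
  have "(g \<longlongrightarrow> 0) at_bot"
    unfolding g_def
    by (intro tendsto_divide_0[OF tendsto_const]
        filterlim_mono[OF filterlim_ident at_bot_le_at_infinity order_refl])
  moreover have "(g \<longlongrightarrow> 1) (at_left (-c))"
    unfolding g_def using c by (auto intro!: tendsto_eq_intros)
  ultimately have lim: "((ereal \<circ> g \<circ> real_of_ereal) \<longlongrightarrow> ereal 0) (at_right (-\<infinity>))"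
      "((ereal \<circ> g \<circ> real_of_ereal) \<longlongrightarrow> ereal 1) (at_left (ereal (-c)))"
    by (simp_all add: ereal_tendsto_simps)
  have deriv: "DERIV g v :> g' v" "isCont f (g v)" "isCont g' v"
    if "-\<infinity> < ereal v" "ereal v < ereal (-c)" for v
  proof -
    have v: "v < -c" using that by simp
    then show "DERIV g v :> g' v"
      using c unfolding g_def g'_def by (auto intro!: derivative_eq_intros simp: power2_eq_square)
    show "isCont g' v"
      using v c unfolding g'_def by (intro continuous_intros) auto
    have "g v > 0" using v c by (simp add: g_def divide_pos_neg)
    then show "isCont f (g v)"
      unfolding f_def by (intro continuous_intros) auto
  qed
  have nonneg: "0 \<le> f (g v)" "0 \<le> g' v" for v
    using c by (simp_all add: f_def g'_def)
  note substitution =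
    interval_integral_substitution_nonneg[OF ereal_MInfty_lessI deriv nonneg lim integrable]
  show "set_integrable lborel {0<..<1} (\<lambda>t. t powr (-s-1) * exp (-c/t))"
    using substitution(1) by (simp add: f_def)
  have "(LINT t:{0<..<1}|lborel. t powr (-s-1) * exp (-c/t)) = (LBINT v=-\<infinity>..ereal (-c). f (g v) * g' v)"
    using substitution(2) by (simp add: interval_integral_Ioo f_def)
  also have "\<dots> = (LBINT u=ereal c..\<infinity>. f (g (-u)) * g' (-u))"
    using interval_integral_reflect[of "-\<infinity>" "ereal (-c)" "\<lambda>v. f (g v) * g' v"] by simp
  also have "\<dots> = (LINT u:{c<..}|lborel. c powr (-s) * (u powr (s-1) * exp (-u)))"
    unfolding interval_integral_to_infinity_eq by (rule set_lebesgue_integral_cong) (use c subst in auto)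
  also have "\<dots> = c powr (-s) * upper_inc_Gamma s c"
    by (simp add: upper_inc_Gamma_def)
  finally show "(LINT t:{0<..<1}|lborel. t powr (-s-1) * exp (-c/t)) = c powr (-s) * upper_inc_Gamma s c" .
qed

lemma set_integral_square_powr_exp_inverse:
  fixes a c :: real
  assumes "c > 0" and "a \<ge> 0"
  shows "set_integrable lborel {0<..<1} (\<lambda>t. (t powr (a-1) * exp (-c/t))^2)"
    and "(LINT t:{0<..<1}|lborel. (t powr (a-1) * exp (-c/t))^2) =
           (2*c) powr (2*a-1) * upper_inc_Gamma (1 - 2*a) (2*c)"
proof -
  have square: "(t powr (a-1) * exp (-c/t))^2 = t powr (-(1 - 2*a) - 1) * exp (-(2*c)/t)" for t
    by (simp add: power2_eq_square powr_add[symmetric] exp_add[symmetric] algebra_simps)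
  note gamma = set_integral_powr_exp_inverse[of "2*c" "1 - 2*a"]
  show "set_integrable lborel {0<..<1} (\<lambda>t. (t powr (a-1) * exp (-c/t))^2)"
    unfolding square using gamma(1) assms by simp
  show "(LINT t:{0<..<1}|lborel. (t powr (a-1) * exp (-c/t))^2) =
      (2*c) powr (2*a-1) * upper_inc_Gamma (1 - 2*a) (2*c)"
    unfolding square using gamma(2) assms by simp
qed

theorem mainTheorem2:
  fixes p q x y :: real
  assumes "p > 0" and "q > 0" and "0 < x" and "x < 1/2" and "0 < y" and "y < 1/2"
  shows "ext_beta p q x y \<le>
           (2*p) powr ((2*x - 1)/2) * (2*q) powr ((2*y - 1)/2) *
           sqrt (upper_inc_Gamma (-2*x + 1) (2*p) * upper_inc_Gamma (-2*y + 1) (2*q))"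
proof -
  define \<phi> where "\<phi> t = t powr (x-1) * exp (-p/t)" for t :: real
  define \<psi> where "\<psi> t = t powr (y-1) * exp (-q/t)" for t :: real
  have \<phi>: "set_integrable lborel {0<..<1} (\<lambda>t. \<phi> t ^ 2)"
      "(LINT t:{0<..<1}|lborel. \<phi> t ^ 2) = (2*p) powr (2*x - 1) * upper_inc_Gamma (1 - 2*x) (2*p)"
    using assms set_integral_square_powr_exp_inverse[of p x] by (simp_all add: \<phi>_def)
  have \<psi>: "set_integrable lborel {0<..<1} (\<lambda>t. \<psi> (1 - t) ^ 2)"
      "(LINT t:{0<..<1}|lborel. \<psi> (1 - t) ^ 2) = (2*q) powr (2*y - 1) * upper_inc_Gamma (1 - 2*y) (2*q)"
    using assms set_integral_square_powr_exp_inverse[of q y]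
      set_integral_reflect_unit_interval[of "\<lambda>t. \<psi> t ^ 2"] by (simp_all add: \<psi>_def)
  have "ext_beta p q x y = (LINT t:{0<..<1}|lborel. \<phi> t * \<psi> (1 - t))"
    unfolding ext_beta_def \<phi>_def \<psi>_def
    by (rule set_lebesgue_integral_cong) (auto simp: exp_add[symmetric] mult_ac)
  also have "\<dots> \<le> sqrt ((2*p) powr (2*x - 1) * upper_inc_Gamma (1 - 2*x) (2*p) *
                       ((2*q) powr (2*y - 1) * upper_inc_Gamma (1 - 2*y) (2*q)))"
    using set_integral_mult_le_sqrt[OF \<phi>(1) \<psi>(1)] unfolding \<phi>(2) \<psi>(2) .
  also have "\<dots> = (2*p) powr ((2*x - 1)/2) * (2*q) powr ((2*y - 1)/2) *
                    sqrt (upper_inc_Gamma (-2*x + 1) (2*p) * upper_inc_Gamma (-2*y + 1) (2*q))"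
    using assms by (simp add: real_sqrt_mult powr_half_sqrt[symmetric] powr_powr mult_ac)
  finally show ?thesis .
qed

end
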